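(* Let $\mathbf{x}\in\mathbb{R}^d$ and consider the training set $\{(\mathbf{x},1),(-\mathbf{x},-1)\}$ classified by the minimum norm interpolant $g_K$ of the CNTK-GAP kernel $K$ (patch size $q$, $1\le q\le d$), assuming the Gram matrix $H_K$ on $\{\mathbf{x},-\mathbf{x}\}$ is invertible. Then the resulting linear classifier has separating hyperplane $\mathbf{z}^T\mathbf{1}_d=0$, and its margin on the training set equals the difference between the DC components of the two training points, $|f_{dc}(\mathbf{x})-f_{dc}(-\mathbf{x})|$.
   Context: $f_{dc}(\mathbf{x})=\frac{1}{\sqrt d}\sum_{i=1}^d x_i$. The margin of a hyperplane through the origin with unit normal $\mathbf{w}$ separating a point $\mathbf{a}$ (low side) from $\mathbf{b}$ (high side) is $\mathbf{w}^T\mathbf{b}-\mathbf{w}^T\mathbf{a}$. FC-NTK on $\mathbb{R}^q$: $k(\mathbf{u},\mathbf{v})=\frac{1}{\pi}\left(2\mathbf{u}^T\mathbf{v}(\pi-\phi)+\|\mathbf{u}\|\|\mathbf{v}\|\sin\phi\right)$ with $\phi$ the angle between $\mathbf{u},\mathbf{v}$ ($k=0$ if an argument is $0$). CNTK-GAP: $K(\mathbf{z},\mathbf{x})=\frac{1}{d^2}\sum_{i,j=1}^d k(\bar{\mathbf{z}}_i,\bar{\mathbf{x}}_j)$ where $\bar{\mathbf{z}}_i=(z_i,z_{i+1},\dots,z_{i+q-1})^T$ with indices cyclic mod $d$. Minimum norm interpolant: $g_K(\mathbf{z})=(K(\mathbf{z},\mathbf{x}),K(\mathbf{z},-\mathbf{x}))H_K^{-1}(1,-1)^T$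 with $H_K$ the $2\times2$ Gram matrix of $K$ on $(\mathbf{x},-\mathbf{x})$. $\mathbf{1}_d$ is the all-ones vector. *)

theory Defs
  imports "HOL-Analysis.Analysis"
begin

text \<open>Vectors of R^m are represented as functions nat \<Rightarrow> real; only the
entries with index < m matter.\<close>

definition ip :: "nat \<Rightarrow> (nat \<Rightarrow> real) \<Rightarrow> (nat \<Rightarrow> real) \<Rightarrow> real" where
  "ip m u v = (\<Sum>i<m. u i * v i)"

definition vnorm :: "nat \<Rightarrow> (nat \<Rightarrow> real) \<Rightarrow> real" where
  "vnorm m u = sqrt (ip m u u)"

definition fc_ntk :: "nat \<Rightarrow> (nat \<Rightarrow> real) \<Rightarrow> (nat \<Rightarrow> real) \<Rightarrow> real" where
  "fc_ntk q u v =
     (if vnorm q u = 0 \<or> vnorm q v = 0 then 0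
      else (let \<phi> = arccos (ip q u v / (vnorm q u * vnorm q v)) in
        (1 / pi) * (2 * ip q u v * (pi - \<phi>) + vnorm q u * vnorm q v * sin \<phi>)))"

definition patch :: "nat \<Rightarrow> nat \<Rightarrow> (nat \<Rightarrow> real) \<Rightarrow> nat \<Rightarrow> (nat \<Rightarrow> real)" where
  "patch d q z i = (\<lambda>k. z ((i + k) mod d))"

definition cntk_gap :: "nat \<Rightarrow> nat \<Rightarrow> (nat \<Rightarrow> real) \<Rightarrow> (nat \<Rightarrow> real) \<Rightarrow> real" where
  "cntk_gap d q z x =
     (1 / real d ^ 2) * (\<Sum>i<d. \<Sum>j<d. fc_ntk q (patch d q z i) (patch d q x j))"

definition gram :: "nat \<Rightarrow> nat \<Rightarrow> (nat \<Rightarrow> real) \<Rightarrow> real^2^2" where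
  "gram d q x = vector [vector [cntk_gap d q x x, cntk_gap d q x (-x)],
                        vector [cntk_gap d q (-x) x, cntk_gap d q (-x) (-x)]]"

definition g_K :: "nat \<Rightarrow> nat \<Rightarrow> (nat \<Rightarrow> real) \<Rightarrow> (nat \<Rightarrow> real) \<Rightarrow> real" where
  "g_K d q x z =
     ((vector [cntk_gap d q z x, cntk_gap d q z (-x)] :: real^2) v* matrix_inv (gram d q x))
       \<bullet> (vector [1, -1] :: real^2)"

definition f_dc :: "nat \<Rightarrow> (nat \<Rightarrow> real) \<Rightarrow> real" where
  "f_dc d x = (1 / sqrt (real d)) * (\<Sum>i<d. x i)"

text \<open>Margin of hyperplane through origin with normal w, a on low side, b on high side.\<close>
definition margin :: "nat \<Rightarrow> (nat \<Rightarrow> real) \<Rightarrow> (nat \<Rightarrow> real) \<Rightarrow> (nat \<Rightarrow> real) \<Rightarrow> real" where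
  "margin d w a b = ip d w b - ip d w a"

end

theory Submission
  imports Defs
begin

text \<open>Since \<open>arccos (-t) = pi - arccos t\<close>, the FC-NTK satisfies
\<open>k(u,v) - k(u,-v) = 2 u\<^sup>Tv\<close>. Summing over all pairs of cyclic patches, each patch
position contributes the product of the coordinate sums, so the odd part
\<open>K(z,x) - K(z,-x)\<close> of the CNTK-GAP kernel is \<open>(2q/d) f\<^sub>d\<^sub>c(z) f\<^sub>d\<^sub>c(x)\<close>.
As \<open>K(-z,-x) = K(z,x)\<close>, the Gram matrix has the form \<open>[[a,b],[b,a]]\<close>, which maps
\<open>(1,-1)\<^sup>T\<close> to \<open>(a-b)(1,-1)\<^sup>T\<close>. Hence \<open>g\<^sub>K(z)\<close> is that odd part divided by
\<open>a - b\<close>, i.e. \<open>g\<^sub>K(z) = f\<^sub>d\<^sub>c(z) / f\<^sub>d\<^sub>c(x)\<close>: a positive multiple of the inner product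
with the unit vector \<open>sgn(f\<^sub>d\<^sub>c(x)) 1\<^sub>d / sqrt d\<close>.\<close>

lemma fun_minus_minus [simp]: "- (- f) = (f :: 'a \<Rightarrow> 'b::group_add)"
  by (simp add: fun_eq_iff)

lemma sum_lessThan_shift_mod:
  fixes f :: "nat \<Rightarrow> 'a::comm_monoid_add"
  shows "(\<Sum>i<d. f ((i + k) mod d)) = (\<Sum>i<d. f i)"
proof (cases "d = 0")
  case False
  have "inj_on (\<lambda>i. (i + k) mod d) {..<d}"
  proof (rule inj_onI)
    fix i j assume "i \<in> {..<d}" "j \<in> {..<d}" and shifted: "(i + k) mod d = (j + k) mod d"
    from shifted have "i mod d = j mod d" using nat_mod_eq_iff by force
    with \<open>i \<in> {..<d}\<close> \<open>j \<in> {..<d}\<close> show "i = j" by simp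
  qed
  moreover have "(\<lambda>i. (i + k) mod d) ` {..<d} \<subseteq> {..<d}" using False by auto
  ultimately have "bij_betw (\<lambda>i. (i + k) mod d) {..<d} {..<d}"
    by (simp add: bij_betw_def endo_inj_surj)
  then show ?thesis by (rule sum.reindex_bij_betw)
qed simp

lemma ip_uminus_left [simp]: "ip m (- u) v = - ip m u v"
  by (simp add: ip_def sum_negf)

lemma ip_uminus_right [simp]: "ip m u (- v) = - ip m u v"
  by (simp add: ip_def sum_negf)

lemma ip_const_left: "ip m (\<lambda>_. c) v = c * (\<Sum>i<m. v i)"
  by (simp add: ip_def sum_distrib_left)

lemma ip_self_nonneg: "0 \<le> ip m u u"
  by (simp add: ip_def sum_nonneg)

lemma vnorm_uminus [simp]: "vnorm m (- u) = vnorm m u"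
  by (simp add: vnorm_def)

lemma abs_ip_le_vnorm: "\<bar>ip m u v\<bar> \<le> vnorm m u * vnorm m v"
proof -
  have "(ip m u v)\<^sup>2 \<le> ip m u u * ip m v v"
    using Cauchy_Schwarz_ineq_sum[of u v "{..<m}"] by (simp add: ip_def power2_eq_square)
  then have "sqrt ((ip m u v)\<^sup>2) \<le> sqrt (ip m u u * ip m v v)"
    by (rule real_sqrt_le_mono)
  then show ?thesis by (simp add: vnorm_def real_sqrt_mult)
qed

lemma f_dc_uminus [simp]: "f_dc d (- x) = - f_dc d x"
  by (simp add: f_dc_def sum_negf)

lemma f_dc_const: "f_dc d (\<lambda>_. c) = sqrt d * c"
  by (cases "d = 0") (simp_all add: f_dc_def field_simps)

lemma fc_ntk_uminus_uminus [simp]: "fc_ntk q (- u) (- v) = fc_ntk q u v"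
  by (simp add: fc_ntk_def)

lemma fc_ntk_odd_part: "fc_ntk q u v - fc_ntk q u (- v) = 2 * ip q u v"
proof (cases "vnorm q u = 0 \<or> vnorm q v = 0")
  case True
  then have "ip q u v = 0" using abs_ip_le_vnorm[of q u v] by auto
  with True show ?thesis by (simp add: fc_ntk_def)
next
  case False
  let ?A = "vnorm q u" and ?B = "vnorm q v" and ?p = "ip q u v"
  define t where "t = ?p / (?A * ?B)"
  define \<phi> where "\<phi> = arccos t"
  have "0 < ?A * ?B"
    using False ip_self_nonneg[of q u] ip_self_nonneg[of q v] by (simp add: vnorm_def)
  then have "\<bar>t\<bar> \<le> 1"
    using abs_ip_le_vnorm[of q u v] by (simp add: t_def divide_le_eq_1)
  then have "arccos (- t) = pi - \<phi>"
    unfolding \<phi>_def by (intro arccos_minus) auto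
  then have minus: "fc_ntk q u (- v) = (1 / pi) * (- 2 * ?p * \<phi> + ?A * ?B * sin \<phi>)"
    using False by (simp add: fc_ntk_def Let_def t_def)
  have plus: "fc_ntk q u v = (1 / pi) * (2 * ?p * (pi - \<phi>) + ?A * ?B * sin \<phi>)"
    using False by (simp add: fc_ntk_def Let_def \<phi>_def t_def)
  show ?thesis unfolding plus minus by (simp add: field_simps)
qed

lemma patch_uminus: "patch d q (- x) i = - patch d q x i"
  by (simp add: patch_def fun_eq_iff)

lemma cntk_gap_uminus_uminus [simp]: "cntk_gap d q (- z) (- x) = cntk_gap d q z x"
  by (simp add: cntk_gap_def patch_uminus)

lemma cntk_gap_uminus_left: "cntk_gap d q (- z) x = cntk_gap d q z (- x)"
  using cntk_gap_uminus_uminus[of d q z "- x"] by simp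

lemma sum_patch_ip:
  "(\<Sum>i<d. \<Sum>j<d. ip q (patch d q z i) (patch d q x j)) = q * (\<Sum>i<d. z i) * (\<Sum>j<d. x j)"
proof -
  have "(\<Sum>i<d. \<Sum>j<d. ip q (patch d q z i) (patch d q x j))
      = (\<Sum>k<q. (\<Sum>i<d. z ((i + k) mod d)) * (\<Sum>j<d. x ((j + k) mod d)))"
    by (simp add: ip_def patch_def sum_product sum.swap[of _ "{..<q}"])
  then show ?thesis by (simp add: sum_lessThan_shift_mod)
qed

lemma cntk_gap_odd_part:
  "cntk_gap d q z x - cntk_gap d q z (- x) = 2 * real q * f_dc d z * f_dc d x / d"
proof -
  have "cntk_gap d q z x - cntk_gap d q z (- x) = (\<Sum>i<d. \<Sum>j<d.
      fc_ntk q (patch d q z i) (patch d q x j) - fc_ntk q (patch d q z i) (- patch d q x j)) / d\<^sup>2"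
    by (simp add: cntk_gap_def patch_uminus sum_subtractf diff_divide_distrib)
  also have "\<dots> = 2 * (\<Sum>i<d. \<Sum>j<d. ip q (patch d q z i) (patch d q x j)) / d\<^sup>2"
    by (simp add: fc_ntk_odd_part sum_distrib_left)
  also have "\<dots> = 2 * real q * f_dc d z * f_dc d x / d"
    by (simp add: sum_patch_ip f_dc_def power2_eq_square)
  finally show ?thesis .
qed

lemma matrix_inv_mult_vector_eq:
  fixes A :: "'a::comm_semiring_1^'n^'m"
  assumes "invertible A" and "A *v u = y"
  shows "matrix_inv A *v y = u"
proof -
  have "matrix_inv A ** A = mat 1"
    using someI_ex[OF assms(1)[unfolded invertible_def]] by (simp add: matrix_inv_def)
  then show ?thesis
    using assms(2) by (metis matrix_vector_mul_assoc matrix_vector_mul_lid)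
qed

lemma invertible_circulant2_imp_neq:
  fixes a b :: real
  assumes "invertible (vector [vector [a, b], vector [b, a]] :: real^2^2)"
  shows "a \<noteq> b"
  using assms by (auto simp: invertible_det_nz det_2)

lemma matrix_inv_circulant2_alternating:
  fixes a b :: real
  assumes "invertible (vector [vector [a, b], vector [b, a]] :: real^2^2)"
  shows "matrix_inv (vector [vector [a, b], vector [b, a]] :: real^2^2) *v vector [1, -1]
           = (1 / (a - b)) *s vector [1, -1]"
proof (rule matrix_inv_mult_vector_eq[OF assms])
  show "(vector [vector [a, b], vector [b, a]] :: real^2^2) *v ((1 / (a - b)) *s vector [1, -1])
          = vector [1, -1]"
    using invertible_circulant2_imp_neq[OF assms]
    by (simp add: vec_eq_iff forall_2 matrix_vector_mult_def sum_2 divide_simps)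
qed

lemma gram_eq_circulant2:
  "gram d q x = vector [vector [cntk_gap d q x x, cntk_gap d q x (- x)],
                        vector [cntk_gap d q x (- x), cntk_gap d q x x]]"
  by (simp add: gram_def cntk_gap_uminus_left[of _ _ x x])

lemma g_K_eq_odd_part_ratio:
  assumes "invertible (gram d q x)"
  shows "g_K d q x z = (cntk_gap d q z x - cntk_gap d q z (- x))
                       / (cntk_gap d q x x - cntk_gap d q x (- x))"
proof -
  have "g_K d q x z = vector [cntk_gap d q z x, cntk_gap d q z (- x)]
                        \<bullet> (matrix_inv (gram d q x) *v vector [1, -1])"
    by (simp add: g_K_def dot_lmul_matrix)
  also have "\<dots> = (vector [cntk_gap d q z x, cntk_gap d q z (- x)] :: real^2) \<bullet>
      ((1 / (cntk_gap d q x x - cntk_gap d q x (- x))) *s vector [1, -1])"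
    using matrix_inv_circulant2_alternating[OF assms[unfolded gram_eq_circulant2]]
    by (simp add: gram_eq_circulant2)
  finally show ?thesis
    by (simp add: scalar_mult_eq_scaleR inner_vec_def sum_2 diff_divide_distrib)
qed

lemma invertible_gram_imp_odd_part_nonzero:
  assumes "invertible (gram d q x)"
  shows "cntk_gap d q x x - cntk_gap d q x (- x) \<noteq> 0"
  using invertible_circulant2_imp_neq[OF assms[unfolded gram_eq_circulant2]] by simp

lemma g_K_eq_f_dc_ratio:
  assumes "invertible (gram d q x)"
  shows "g_K d q x z = f_dc d z / f_dc d x"
  using invertible_gram_imp_odd_part_nonzero[OF assms]
  by (simp add: g_K_eq_odd_part_ratio[OF assms] cntk_gap_odd_part)

lemma invertible_gram_imp_f_dc_nonzero:
  assumes "invertible (gram d q x)"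
  shows "f_dc d x \<noteq> 0"
  using invertible_gram_imp_odd_part_nonzero[OF assms] by (simp add: cntk_gap_odd_part)

theorem corollary2:
  fixes d q :: nat and x :: "nat \<Rightarrow> real"
  assumes "1 \<le> q" and "q \<le> d"
    and "invertible (gram d q x)"
  shows "\<exists>w c. vnorm d w = 1 \<and> (\<forall>i<d. w i = w 0) \<and> c > 0
           \<and> (\<forall>z. g_K d q x z = c * ip d w z)
           \<and> margin d w (-x) x = \<bar>f_dc d x - f_dc d (-x)\<bar>"
proof -
  have "0 < d" using assms(1,2) by simp
  have "f_dc d x \<noteq> 0" using assms(3) by (rule invertible_gram_imp_f_dc_nonzero)
  define w where "w = (\<lambda>_::nat. sgn (f_dc d x) / sqrt d)"
  have ip_w: "ip d w z = sgn (f_dc d x) * f_dc d z" for z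
    by (simp add: w_def ip_const_left f_dc_def)
  show ?thesis
  proof (intro exI conjI allI impI)
    have "f_dc d w = sgn (f_dc d x)" using \<open>0 < d\<close> by (simp add: w_def f_dc_const)
    then show "vnorm d w = 1" using \<open>f_dc d x \<noteq> 0\<close> by (simp add: vnorm_def ip_w sgn_if)
    show "w i = w 0" for i by (simp add: w_def)
    show "0 < 1 / \<bar>f_dc d x\<bar>" using \<open>f_dc d x \<noteq> 0\<close> by simp
    show "g_K d q x z = 1 / \<bar>f_dc d x\<bar> * ip d w z" for z
      using \<open>f_dc d x \<noteq> 0\<close> by (simp add: g_K_eq_f_dc_ratio[OF assms(3)] ip_w sgn_if)
    show "margin d w (- x) x = \<bar>f_dc d x - f_dc d (- x)\<bar>"
      by (simp add: margin_def ip_w sgn_if)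
  qed
qed

end
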